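(* Away from characteristic points of a regular surface $\Sigma\subset\mathbb{M}$, the mean curvature $\mathcal H_{\nabla^{1,\alpha},L}:=\mathrm{tr}\,II^{\nabla^{1,\alpha},L}$ satisfies $$\mathcal H_{\nabla^{1,\alpha},\infty}:=\lim_{L\to+\infty}\mathcal H_{\nabla^{1,\alpha},L}=X_1(\bar p)+X_2(\bar q)-(1-\alpha)\bar p.$$
   Context: The affine group $\mathbb{M}$ is modeled on $\{(x_1,x_2,x_3)\in\mathbb{R}^3: x_1>0\}$ with product $(m,n,s)\star(\lambda,\mu,\nu)=(m\lambda,m\mu+n,\nu+s)$. Put $X_1=x_1\partial_{x_1}$, $X_2=x_1\partial_{x_2}+\partial_{x_3}$, $X_3=x_1\partial_{x_2}$, with dual coframe $\omega_1=\frac1{x_1}dx_1$, $\omega_2=dx_3$, $\omega=\frac1{x_1}dx_2-dx_3$. For a constant $L>0$, $g_L=\omega_1\otimes\omega_1+\omega_2\otimes\omega_2+L\,\omega\otimes\omega$, so $X_1,X_2,\widetilde X_3:=L^{-1/2}X_3$ is $g_L$-orthonormal; $\langle\cdot,\cdot\rangle_L$ denotes $g_L$, and $\nabla$ is the Levi-Civita connection of $g_L$. Let $H_1=\mathrm{span}\{X_1,X_2\}$, and let $P^1$, $P^{1,\perp}$ be the $g_L$-orthogonal projections onto $H_1$ and onto $H_1^\perp=\mathrm{span}\{X_3\}$. For a real constant $\alpha$, the first kind of deformed Schouten–Van Kampen connection is $\nabla^{1,\alpha}_XY=(1-\alpha)\nabla_XY+\alpha P^1\nabla_X(P^1Y)+\alpha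 P^{1,\perp}\nabla_X(P^{1,\perp}Y)$. A regular surface is a Euclidean $C^2$-smooth compact oriented surface $\Sigma=\{u=0\}$ with $u$ Euclidean $C^2$ and with nonvanishing Euclidean gradient. $\nabla_Hu=X_1(u)X_1+X_2(u)X_2$; a point of $\Sigma$ is characteristic if $\nabla_Hu=0$. Put $p=X_1u$, $q=X_2u$, $r=\widetilde X_3u$, $l=\sqrt{p^2+q^2}$, $l_L=\sqrt{p^2+q^2+r^2}$, $\bar p=p/l$, $\bar q=q/l$, $\bar p_L=p/l_L$, $\bar q_L=q/l_L$, $\bar r_L=r/l_L$; $v_L=\bar p_LX_1+\bar q_LX_2+\bar r_L\widetilde X_3$, $e_1=\bar qX_1-\bar pX_2$, $e_2=\bar r_L\bar pX_1+\bar r_L\bar qX_2-\frac{l}{l_L}\widetilde X_3$. The second fundamental form is $II^{\nabla^{1,\alpha},L}=(\langle\nabla^{1,\alpha}_{e_i}v_L,e_j\rangle_L)_{i,j=1,2}$. *)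

theory Defs
  imports "HOL-Analysis.Analysis"
begin

text \<open>The affine group M modelled on {x in R^3. x1 > 0}; points are real^3,
 vector fields are maps real^3 => real^3 (Euclidean components w.r.t. d/dx1,d/dx2,d/dx3).\<close>

definition Mset :: "(real^3) set" where
  "Mset = {x. x$1 > 0}"

definition X1 :: "real^3 \<Rightarrow> real^3" where
  "X1 x = vector [x$1, 0, 0]"

definition X2 :: "real^3 \<Rightarrow> real^3" where
  "X2 x = vector [0, x$1, 1]"

definition X3 :: "real^3 \<Rightarrow> real^3" where
  "X3 x = vector [0, x$1, 0]"

definition X3t :: "real \<Rightarrow> real^3 \<Rightarrow> real^3" where
  "X3t L x = (1 / sqrt L) *\<^sub>R X3 x"

definition vf :: "(real^3 \<Rightarrow> real^3) \<Rightarrow> (real^3 \<Rightarrow> 'b::real_normed_vector) \<Rightarrow> real^3 \<Rightarrow> 'b" where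
  "vf X f x = frechet_derivative f (at x) (X x)"

definition lie :: "(real^3 \<Rightarrow> real^3) \<Rightarrow> (real^3 \<Rightarrow> real^3) \<Rightarrow> real^3 \<Rightarrow> real^3" where
  "lie X Y x = vf X Y x - vf Y X x"

definition gL :: "real \<Rightarrow> real^3 \<Rightarrow> real^3 \<Rightarrow> real^3 \<Rightarrow> real" where
  "gL L x v w = (v$1 / x$1) * (w$1 / x$1) + (v$3) * (w$3)
      + L * ((v$2 / x$1 - v$3) * (w$2 / x$1 - w$3))"

text \<open>The g_L-orthonormal frame X1, X2, X3~.\<close>
definition frame :: "real \<Rightarrow> nat \<Rightarrow> real^3 \<Rightarrow> real^3" where
  "frame L i = (if i = 1 then X1 else if i = 2 then X2 else X3t L)"

text \<open>Christoffel symbols <nabla_{E_i} E_j, E_k> of the Levi-Civita connection in the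
 orthonormal frame, from the Koszul formula.\<close>
definition Gamma :: "real \<Rightarrow> nat \<Rightarrow> nat \<Rightarrow> nat \<Rightarrow> real^3 \<Rightarrow> real" where
  "Gamma L i j k x = (1/2) *
     (gL L x (lie (frame L i) (frame L j) x) (frame L k x)
      - gL L x (lie (frame L i) (frame L k) x) (frame L j x)
      - gL L x (lie (frame L j) (frame L k) x) (frame L i x))"

definition LC :: "real \<Rightarrow> (real^3 \<Rightarrow> real^3) \<Rightarrow> (real^3 \<Rightarrow> real^3) \<Rightarrow> real^3 \<Rightarrow> real^3" where
  "LC L X Y x = (\<Sum>k\<in>{1,2,3::nat}.
      (vf X (\<lambda>y. gL L y (Y y) (frame L k y)) x
       + (\<Sum>i\<in>{1,2,3::nat}. \<Sum>j\<in>{1,2,3::nat}.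
            gL L x (X x) (frame L i x) * gL L x (Y x) (frame L j x) * Gamma L i j k x))
      *\<^sub>R frame L k x)"

definition P1 :: "real \<Rightarrow> real^3 \<Rightarrow> real^3 \<Rightarrow> real^3" where
  "P1 L x v = gL L x v (X1 x) *\<^sub>R X1 x + gL L x v (X2 x) *\<^sub>R X2 x"

definition Pperp :: "real \<Rightarrow> real^3 \<Rightarrow> real^3 \<Rightarrow> real^3" where
  "Pperp L x v = gL L x v (X3t L x) *\<^sub>R X3t L x"

definition nabla1 :: "real \<Rightarrow> real \<Rightarrow> (real^3 \<Rightarrow> real^3) \<Rightarrow> (real^3 \<Rightarrow> real^3) \<Rightarrow> real^3 \<Rightarrow> real^3" where
  "nabla1 L \<alpha> X Y x = (1 - \<alpha>) *\<^sub>R LC L X Y x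
      + \<alpha> *\<^sub>R P1 L x (LC L X (\<lambda>y. P1 L y (Y y)) x)
      + \<alpha> *\<^sub>R Pperp L x (LC L X (\<lambda>y. Pperp L y (Y y)) x)"

definition C1_on :: "(real^3) set \<Rightarrow> (real^3 \<Rightarrow> real) \<Rightarrow> bool" where
  "C1_on S f \<longleftrightarrow> (\<forall>x\<in>S. f differentiable (at x))
      \<and> (\<forall>v. continuous_on S (\<lambda>x. frechet_derivative f (at x) v))"

definition C2_on :: "(real^3) set \<Rightarrow> (real^3 \<Rightarrow> real) \<Rightarrow> bool" where
  "C2_on S f \<longleftrightarrow> C1_on S f \<and> (\<forall>v. C1_on S (\<lambda>x. frechet_derivative f (at x) v))"

definition surf :: "(real^3 \<Rightarrow> real) \<Rightarrow> (real^3) set" where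
  "surf u = {x \<in> Mset. u x = 0}"

definition nablaH :: "(real^3 \<Rightarrow> real) \<Rightarrow> real^3 \<Rightarrow> real^3" where
  "nablaH u x = vf X1 u x *\<^sub>R X1 x + vf X2 u x *\<^sub>R X2 x"

definition pf :: "(real^3 \<Rightarrow> real) \<Rightarrow> real^3 \<Rightarrow> real" where "pf u x = vf X1 u x"
definition qf :: "(real^3 \<Rightarrow> real) \<Rightarrow> real^3 \<Rightarrow> real" where "qf u x = vf X2 u x"
definition rf :: "real \<Rightarrow> (real^3 \<Rightarrow> real) \<Rightarrow> real^3 \<Rightarrow> real" where "rf L u x = vf (X3t L) u x"
definition lf :: "(real^3 \<Rightarrow> real) \<Rightarrow> real^3 \<Rightarrow> real" where
  "lf u x = sqrt ((pf u x)^2 + (qf u x)^2)"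
definition lLf :: "real \<Rightarrow> (real^3 \<Rightarrow> real) \<Rightarrow> real^3 \<Rightarrow> real" where
  "lLf L u x = sqrt ((pf u x)^2 + (qf u x)^2 + (rf L u x)^2)"
definition pbar :: "(real^3 \<Rightarrow> real) \<Rightarrow> real^3 \<Rightarrow> real" where "pbar u x = pf u x / lf u x"
definition qbar :: "(real^3 \<Rightarrow> real) \<Rightarrow> real^3 \<Rightarrow> real" where "qbar u x = qf u x / lf u x"
definition pbarL :: "real \<Rightarrow> (real^3 \<Rightarrow> real) \<Rightarrow> real^3 \<Rightarrow> real" where "pbarL L u x = pf u x / lLf L u x"
definition qbarL :: "real \<Rightarrow> (real^3 \<Rightarrow> real) \<Rightarrow> real^3 \<Rightarrow> real" where "qbarL L u x = qf u x / lLf L u x"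
definition rbarL :: "real \<Rightarrow> (real^3 \<Rightarrow> real) \<Rightarrow> real^3 \<Rightarrow> real" where "rbarL L u x = rf L u x / lLf L u x"

definition vL :: "real \<Rightarrow> (real^3 \<Rightarrow> real) \<Rightarrow> real^3 \<Rightarrow> real^3" where
  "vL L u x = pbarL L u x *\<^sub>R X1 x + qbarL L u x *\<^sub>R X2 x + rbarL L u x *\<^sub>R X3t L x"

definition e1 :: "(real^3 \<Rightarrow> real) \<Rightarrow> real^3 \<Rightarrow> real^3" where
  "e1 u x = qbar u x *\<^sub>R X1 x - pbar u x *\<^sub>R X2 x"

definition e2 :: "real \<Rightarrow> (real^3 \<Rightarrow> real) \<Rightarrow> real^3 \<Rightarrow> real^3" where
  "e2 L u x = (rbarL L u x * pbar u x) *\<^sub>R X1 x + (rbarL L u x * qbar u x) *\<^sub>R X2 x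
      - (lf u x / lLf L u x) *\<^sub>R X3t L x"

definition eframe :: "real \<Rightarrow> (real^3 \<Rightarrow> real) \<Rightarrow> nat \<Rightarrow> real^3 \<Rightarrow> real^3" where
  "eframe L u i = (if i = 1 then e1 u else e2 L u)"

definition IIf :: "real \<Rightarrow> real \<Rightarrow> (real^3 \<Rightarrow> real) \<Rightarrow> nat \<Rightarrow> nat \<Rightarrow> real^3 \<Rightarrow> real" where
  "IIf L \<alpha> u i j x = gL L x (nabla1 L \<alpha> (eframe L u i) (vL L u) x) (eframe L u j x)"

definition meanH :: "real \<Rightarrow> real \<Rightarrow> (real^3 \<Rightarrow> real) \<Rightarrow> real^3 \<Rightarrow> real" where
  "meanH L \<alpha> u x = IIf L \<alpha> u 1 1 x + IIf L \<alpha> u 2 2 x"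

end

theory Submission
  imports Defs "HOL-Real_Asymp.Real_Asymp"
begin

(* In the g_L-orthonormal frame (X1, X2, X3~) the unit normal is v_L = (p, q, r_L) / l_L with
   r_L = (X3 u) / sqrt L, so v_L, e1, e2 and their derivatives are algebraic functions of
   t = 1 / sqrt L and of the first and second derivatives of u at the point.  The Christoffel
   symbols of g_L contain sqrt L, but in <nabla_e v_L, e> those terms carry the factor
   e^3 (e^1 v^2 - e^2 v^1), which vanishes for e1 (it is horizontal) and for e2 (its horizontal
   part is parallel to that of v_L).  Hence the mean curvature is a function of t that is
   continuous at t = 0 as long as p^2 + q^2 > 0; at t = 0 the frame degenerates to e2 = -X3~,
   which contributes nothing, and what remains is X1(pbar) + X2(qbar) - (1 - alpha) pbar. *)

section \<open>The frame X1, X2, X3 and the metric g_L\<close>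

lemma X_fields_axis:
  "X1 = (\<lambda>x. (x$1) *\<^sub>R axis 1 1)"
  "X2 = (\<lambda>x. (x$1) *\<^sub>R axis 2 1 + axis 3 1)"
  "X3 = (\<lambda>x. (x$1) *\<^sub>R axis 2 1)"
  by (auto simp: X1_def X2_def X3_def vec_eq_iff forall_3 axis_def)

lemma has_derivative_first_coordinate: "((\<lambda>x::real^3. x$1) has_derivative (\<lambda>h. h$1)) (at x)"
  by (rule bounded_linear_imp_has_derivative) (rule bounded_linear_vec_nth)

lemma has_derivative_X_fields:
  "(X1 has_derivative (\<lambda>h. (h$1) *\<^sub>R axis 1 1)) (at x)"
  "(X2 has_derivative (\<lambda>h. (h$1) *\<^sub>R axis 2 1)) (at x)"
  "(X3 has_derivative (\<lambda>h. (h$1) *\<^sub>R axis 2 1)) (at x)"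
  unfolding X_fields_axis by (auto intro!: derivative_eq_intros has_derivative_first_coordinate)

lemma has_derivative_X3t:
  "(X3t L has_derivative (\<lambda>h. (1 / sqrt L) *\<^sub>R ((h$1) *\<^sub>R axis 2 1))) (at x)"
  unfolding X3t_def[abs_def] by (auto intro!: derivative_eq_intros has_derivative_X_fields)

lemma lie_X_fields:
  "lie X1 X2 x = X3 x" "lie X2 X1 x = - X3 x"
  "lie X1 (X3t L) x = X3t L x" "lie (X3t L) X1 x = - X3t L x"
  "lie X2 (X3t L) x = 0" "lie (X3t L) X2 x = 0"
  by (simp_all add: lie_def vf_def has_derivative_X_fields[THEN frechet_derivative_at, symmetric]
      has_derivative_X3t[THEN frechet_derivative_at, symmetric],
      simp_all add: X1_def X2_def X3_def X3t_def vec_eq_iff forall_3 axis_def)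

lemma Mset_first_coordinate_pos: "x \<in> Mset \<Longrightarrow> x$1 > 0"
  by (simp add: Mset_def)

lemma open_Mset: "open Mset"
  unfolding Mset_def using open_halfspace_component_gt_cart[of 0 1] by simp

lemma frechet_derivative_eq_on_open:
  assumes "open S" "x \<in> S" "\<And>y. y \<in> S \<Longrightarrow> f y = g y"
  shows "frechet_derivative f (at x) = frechet_derivative g (at x)"
proof -
  have "(f has_derivative f') (at x) = (g has_derivative f') (at x)" for f'
    using has_derivative_transform_within_open[OF _ assms(1,2), of f _ UNIV g]
      has_derivative_transform_within_open[OF _ assms(1,2), of g _ UNIV f] assms(3) by metis
  then show ?thesis unfolding frechet_derivative_def by simp
qed

lemma vf_eq_on_open:
  assumes "open S" "x \<in> S" "\<And>y. y \<in> S \<Longrightarrow> f y = g y"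
  shows "vf X f x = vf X g x"
  unfolding vf_def using frechet_derivative_eq_on_open[OF assms] by simp

lemma gL_X_fields:
  assumes "x$1 > 0" "L > 0"
  shows "gL L x (X3 x) (X1 x) = 0" "gL L x (X3 x) (X2 x) = 0" "gL L x (X3 x) (X3t L x) = sqrt L"
   "gL L x (X3t L x) (X1 x) = 0" "gL L x (X3t L x) (X2 x) = 0" "gL L x (X3t L x) (X3t L x) = 1"
   "gL L x (X1 x) (X1 x) = 1" "gL L x (X1 x) (X2 x) = 0" "gL L x (X1 x) (X3t L x) = 0"
   "gL L x (X2 x) (X1 x) = 0" "gL L x (X2 x) (X2 x) = 1" "gL L x (X2 x) (X3t L x) = 0"
  using assms by (simp_all add: gL_def X1_def X2_def X3_def X3t_def field_simps real_sqrt_divide)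

lemma gL_linear:
  "gL L x (v + w) z = gL L x v z + gL L x w z"
  "gL L x (v - w) z = gL L x v z - gL L x w z"
  "gL L x (c *\<^sub>R v) z = c * gL L x v z"
  "gL L x 0 z = 0"
  "gL L x (- v) z = - gL L x v z"
  "gL L x z (v + w) = gL L x z v + gL L x z w"
  "gL L x z (v - w) = gL L x z v - gL L x z w"
  "gL L x z (c *\<^sub>R v) = c * gL L x z v"
  by (simp_all add: gL_def algebra_simps add_divide_distrib diff_divide_distrib)

lemma gL_frame_coordinates:
  assumes "x$1 > 0" "L > 0"
  shows "gL L x (a *\<^sub>R X1 x + b *\<^sub>R X2 x + c *\<^sub>R X3t L x) (X1 x) = a"
    "gL L x (a *\<^sub>R X1 x + b *\<^sub>R X2 x + c *\<^sub>R X3t L x) (X2 x) = b"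
    "gL L x (a *\<^sub>R X1 x + b *\<^sub>R X2 x + c *\<^sub>R X3t L x) (X3t L x) = c"
  using assms by (simp_all add: gL_linear gL_X_fields)

lemma gL_frame_expansion:
  assumes "x$1 > 0" "L > 0"
  shows "gL L x (a1 *\<^sub>R X1 x + a2 *\<^sub>R X2 x + a3 *\<^sub>R X3t L x)
      (b1 *\<^sub>R X1 x + b2 *\<^sub>R X2 x + b3 *\<^sub>R X3t L x)
     = a1 * b1 + a2 * b2 + a3 * b3"
  using assms by (simp add: gL_linear gL_X_fields)

section \<open>The connections in frame coordinates\<close>

lemma Gamma_frame:
  assumes "x \<in> Mset" "L > 0" "i \<in> {1,2,3}" "j \<in> {1,2,3}" "k \<in> {1,2,3}"
  shows "Gamma L i j k x =
    (if (i,j,k) \<in> {(1,2,3), (2,3,1), (3,2,1)} then sqrt L / 2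
     else if (i,j,k) \<in> {(1,3,2), (2,1,3), (3,1,2)} then - sqrt L / 2
     else if (i,j,k) = (3,1,3) then -1 else if (i,j,k) = (3,3,1) then 1 else 0)"
  using assms Mset_first_coordinate_pos[OF assms(1)]
  by (auto simp: Gamma_def frame_def lie_def[of X X for X] lie_X_fields gL_X_fields gL_linear)

lemma LC_frame_expansion:
  assumes L: "L > 0" and x: "x \<in> Mset"
    and Y: "\<forall>y\<in>Mset. Y y = A y *\<^sub>R X1 y + B y *\<^sub>R X2 y + C y *\<^sub>R X3t L y"
    and X: "X x = z1 *\<^sub>R X1 x + z2 *\<^sub>R X2 x + z3 *\<^sub>R X3t L x"
  shows "LC L X Y x =
     (vf X A x + sqrt L / 2 * (z2 * C x + z3 * B x) + z3 * C x) *\<^sub>R X1 x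
   + (vf X B x - sqrt L / 2 * (z1 * C x + z3 * A x)) *\<^sub>R X2 x
   + (vf X C x + sqrt L / 2 * (z1 * B x - z2 * A x) - z3 * A x) *\<^sub>R X3t L x"
proof -
  have x1: "x$1 > 0" using x by (rule Mset_first_coordinate_pos)
  have "vf X (\<lambda>y. gL L y (Y y) (X1 y)) x = vf X A x"
    "vf X (\<lambda>y. gL L y (Y y) (X2 y)) x = vf X B x"
    "vf X (\<lambda>y. gL L y (Y y) (X3t L y)) x = vf X C x"
    by (rule vf_eq_on_open[OF open_Mset x], simp add: Y gL_frame_coordinates L Mset_def)+
  moreover have "Y x = A x *\<^sub>R X1 x + B x *\<^sub>R X2 x + C x *\<^sub>R X3t L x"
    using Y x by simp
  ultimately show ?thesis
    unfolding LC_def using gL_frame_coordinates[OF x1 L]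
    by (simp add: frame_def X Gamma_frame[OF x L] algebra_simps)
qed

lemma gL_nabla1_self:
  assumes L: "L > 0" and x: "x \<in> Mset"
    and Y: "\<forall>y\<in>Mset. Y y = A y *\<^sub>R X1 y + B y *\<^sub>R X2 y + C y *\<^sub>R X3t L y"
    and X: "X x = z1 *\<^sub>R X1 x + z2 *\<^sub>R X2 x + z3 *\<^sub>R X3t L x"
  shows "gL L x (nabla1 L \<alpha> X Y x) (X x) = z1 * vf X A x + z2 * vf X B x + z3 * vf X C x
      + (2 - \<alpha>) * (sqrt L / 2) * z3 * (z1 * B x - z2 * A x)
      + (1 - \<alpha>) * (z1 * z3 * C x - z3^2 * A x)"
proof -
  have x1: "x$1 > 0" using x by (rule Mset_first_coordinate_pos)
  have P1Y: "\<forall>y\<in>Mset.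
      P1 L y (Y y) = A y *\<^sub>R X1 y + B y *\<^sub>R X2 y + (\<lambda>y. 0) y *\<^sub>R X3t L y"
    using Y gL_frame_coordinates L by (simp add: P1_def Mset_def)
  have PpY: "\<forall>y\<in>Mset.
      Pperp L y (Y y) = (\<lambda>y. 0) y *\<^sub>R X1 y + (\<lambda>y. 0) y *\<^sub>R X2 y + C y *\<^sub>R X3t L y"
    using Y gL_frame_coordinates L by (simp add: Pperp_def Mset_def)
  have vf_0: "vf X (\<lambda>y. 0::real) x = 0" by (simp add: vf_def)
  have P1x: "P1 L x (a *\<^sub>R X1 x + b *\<^sub>R X2 x + c *\<^sub>R X3t L x)
      = a *\<^sub>R X1 x + b *\<^sub>R X2 x + 0 *\<^sub>R X3t L x"
    and Ppx: "Pperp L x (a *\<^sub>R X1 x + b *\<^sub>R X2 x + c *\<^sub>R X3t L x)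
      = 0 *\<^sub>R X1 x + 0 *\<^sub>R X2 x + c *\<^sub>R X3t L x"
    for a b c using gL_frame_coordinates[OF x1 L] by (simp_all add: P1_def Pperp_def)
  show ?thesis
    unfolding nabla1_def gL_linear
    unfolding LC_frame_expansion[where X=X and Y=Y, OF L x Y X]
      LC_frame_expansion[where X=X and Y="\<lambda>y. P1 L y (Y y)" and C="\<lambda>y. 0", OF L x P1Y X]
      LC_frame_expansion[where X=X and Y="\<lambda>y. Pperp L y (Y y)" and A="\<lambda>y. 0" and B="\<lambda>y. 0",
        OF L x PpY X]
    unfolding vf_0 P1x Ppx unfolding X gL_frame_expansion[OF x1 L]
    by (simp add: field_simps power2_eq_square)
qed

section \<open>The mean curvature as a function of 1 / sqrt L\<close>

lemma has_derivative_divide_sqrt_sum_squares: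
  fixes f g h k :: "'a::real_normed_vector \<Rightarrow> real"
  assumes "(f has_derivative f') (at x)" "(g has_derivative g') (at x)" "(h has_derivative h') (at x)"
    and "(k has_derivative k') (at x)" and pos: "f x ^ 2 + g x ^ 2 + h x ^ 2 > 0"
  shows "((\<lambda>y. k y / sqrt (f y ^ 2 + g y ^ 2 + h y ^ 2)) has_derivative
     (\<lambda>v. k' v / sqrt (f x ^ 2 + g x ^ 2 + h x ^ 2)
        - k x * (f x * f' v + g x * g' v + h x * h' v) / sqrt (f x ^ 2 + g x ^ 2 + h x ^ 2) ^ 3)) (at x)"
proof -
  define s where "s = sqrt (f x ^ 2 + g x ^ 2 + h x ^ 2)"
  have "s > 0" "f x ^ 2 + g x ^ 2 + h x ^ 2 = s * s"
    using pos by (simp_all add: s_def flip: power2_eq_square)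
  then show ?thesis
    by (auto intro!: derivative_eq_intros assms simp: s_def[symmetric] field_simps power3_eq_cube)
qed

lemma meanH_frame_expansion:
  assumes L: "L > 0" and x: "x \<in> Mset" and pos: "pf u x ^ 2 + qf u x ^ 2 > 0"
  shows "meanH L \<alpha> u x =
      qbar u x * vf (e1 u) (pbarL L u) x - pbar u x * vf (e1 u) (qbarL L u) x
    + rbarL L u x * (pbar u x * vf (e2 L u) (pbarL L u) x + qbar u x * vf (e2 L u) (qbarL L u) x)
    - lf u x / lLf L u x * vf (e2 L u) (rbarL L u) x
    - (1 - \<alpha>) * pbarL L u x"
proof -
  have vL: "\<forall>y\<in>Mset.
      vL L u y = pbarL L u y *\<^sub>R X1 y + qbarL L u y *\<^sub>R X2 y + rbarL L u y *\<^sub>R X3t L y"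
    by (simp add: vL_def)
  have e1: "e1 u x = qbar u x *\<^sub>R X1 x + (- pbar u x) *\<^sub>R X2 x + 0 *\<^sub>R X3t L x"
    by (simp add: e1_def)
  have e2: "e2 L u x = (rbarL L u x * pbar u x) *\<^sub>R X1 x + (rbarL L u x * qbar u x) *\<^sub>R X2 x
      + (- (lf u x / lLf L u x)) *\<^sub>R X3t L x"
    by (simp add: e2_def)
  have tangent_cancel: "rbarL L u x * pbar u x * qbarL L u x - rbarL L u x * qbar u x * pbarL L u x = 0"
    by (simp add: pbar_def qbar_def pbarL_def qbarL_def)
  have pbarL_correction: "rbarL L u x * pbar u x * (- (lf u x / lLf L u x)) * rbarL L u x
      - (- (lf u x / lLf L u x))\<^sup>2 * pbarL L u x = - pbarL L u x"
  proof -
    define l n r where "l = lf u x" and "n = lLf L u x" and "r = rf L u x"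
    have "l > 0" "n > 0"
      using pos by (auto simp: l_def n_def lf_def lLf_def add_pos_nonneg)
    have "r / n * (pf u x / l) * (- (l / n)) * (r / n) - (l / n)\<^sup>2 * (pf u x / n)
        = - (pf u x / n) * ((l\<^sup>2 + r\<^sup>2) / n\<^sup>2)"
      using \<open>l > 0\<close> by (simp add: field_simps power2_eq_square add_divide_distrib)
    also have "l\<^sup>2 + r\<^sup>2 = n\<^sup>2"
      using pos by (simp add: l_def n_def r_def lf_def lLf_def add_nonneg_nonneg)
    finally show ?thesis
      using \<open>n > 0\<close> by (simp add: rbarL_def pbar_def pbarL_def l_def n_def r_def)
  qed
  have "meanH L \<alpha> u x = gL L x (nabla1 L \<alpha> (e1 u) (vL L u) x) (e1 u x)
      + gL L x (nabla1 L \<alpha> (e2 L u) (vL L u) x) (e2 L u x)"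
    by (simp add: meanH_def IIf_def eframe_def)
  then show ?thesis
    unfolding gL_nabla1_self[where X="e1 u" and Y="vL L u", OF L x vL e1]
      gL_nabla1_self[where X="e2 L u" and Y="vL L u", OF L x vL e2]
      tangent_cancel pbarL_correction
    by (simp add: algebra_simps)
qed

(* Here t = 1 / sqrt L, g i = X_i u and J i j = X_j (X_i u) at the point, where X_3 is the
   unnormalised field X3 = sqrt L X3~.  N, f1 and f2 are the coordinates of grad u, e1 and e2 in the
   frame (X1, X2, X3~); a vector with frame coordinates f has X-coordinates s j * f j, and
   dv f is the derivative of v_L = N / n along it. *)
definition frame_mean_curvature ::
  "real \<Rightarrow> (nat \<Rightarrow> real) \<Rightarrow> (nat \<Rightarrow> nat \<Rightarrow> real) \<Rightarrow> real \<Rightarrow> real" where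
  "frame_mean_curvature \<alpha> g J t =
    (let s = (\<lambda>i::nat. if i = 3 then t else 1);
         N = (\<lambda>i. s i * g i);
         n = sqrt (N 1 ^ 2 + N 2 ^ 2 + N 3 ^ 2);
         l = sqrt (g 1 ^ 2 + g 2 ^ 2);
         f1 = (\<lambda>i. if i = 1 then g 2 / l else if i = 2 then - g 1 / l else 0);
         f2 = (\<lambda>i. if i = 3 then - l / n else N 3 / n * (g i / l));
         dN = (\<lambda>f i. s i * (\<Sum>j\<in>{1,2,3}. J i j * (s j * f j)));
         dv = (\<lambda>f i. dN f i / n - N i * (\<Sum>k\<in>{1,2,3}. N k * dN f k) / n ^ 3)
     in (\<Sum>k\<in>{1,2,3}. f1 k * dv f1 k) + (\<Sum>k\<in>{1,2,3}. f2 k * dv f2 k)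
        - (1 - \<alpha>) * (g 1 / n))"

lemma isCont_frame_mean_curvature_0:
  assumes "g 1 ^ 2 + g 2 ^ 2 > 0"
  shows "isCont (frame_mean_curvature \<alpha> g J) 0"
  unfolding frame_mean_curvature_def[abs_def] Let_def
  using assms by simp (intro continuous_intros, auto)

lemma frame_mean_curvature_0:
  assumes "g 1 ^ 2 + g 2 ^ 2 > 0"
  defines "l \<equiv> sqrt (g 1 ^ 2 + g 2 ^ 2)"
  shows "frame_mean_curvature \<alpha> g J 0 =
      (J 1 1 / l - g 1 * (g 1 * J 1 1 + g 2 * J 2 1) / l ^ 3)
    + (J 2 2 / l - g 2 * (g 1 * J 1 2 + g 2 * J 2 2) / l ^ 3) - (1 - \<alpha>) * (g 1 / l)"
proof -
  define p q where "p = g 1" and "q = g 2"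
  have l: "l > 0" "p\<^sup>2 + q\<^sup>2 = l\<^sup>2"
    using assms by (auto simp: l_def p_def q_def)
  have "g (Suc 0) = p" \<comment> \<open>the simplifier turns the index 1 into Suc 0\<close>
    by (simp add: p_def)
  then have "frame_mean_curvature \<alpha> g J 0 = (q / l) * ((J 1 1 * (q / l) - J 1 2 * (p / l)) / l
        - p * (p * (J 1 1 * (q / l) - J 1 2 * (p / l)) + q * (J 2 1 * (q / l) - J 2 2 * (p / l))) / l ^ 3)
      - (p / l) * ((J 2 1 * (q / l) - J 2 2 * (p / l)) / l
        - q * (p * (J 1 1 * (q / l) - J 1 2 * (p / l)) + q * (J 2 1 * (q / l) - J 2 2 * (p / l))) / l ^ 3)
      - (1 - \<alpha>) * (p / l)"
    unfolding frame_mean_curvature_def Let_def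
    by (simp add: p_def[symmetric] q_def[symmetric] l l_def[symmetric] abs_of_pos)
  also have "\<dots> = (J 1 1 / l - p * (p * J 1 1 + q * J 2 1) / l ^ 3)
    + (J 2 2 / l - q * (p * J 1 2 + q * J 2 2) / l ^ 3) - (1 - \<alpha>) * (p / l)"
    using l by (simp add: field_simps power2_eq_square power3_eq_cube) algebra
  finally show ?thesis by (simp add: p_def q_def)
qed

definition Xfield :: "nat \<Rightarrow> real^3 \<Rightarrow> real^3" where
  "Xfield i = (if i = 1 then X1 else if i = 2 then X2 else X3)"

lemma rf_eq_scaled_vf_X3:
  assumes "u differentiable (at y)"
  shows "rf L u y = 1 / sqrt L * vf X3 u y"
  using assms linear_frechet_derivative[of u "at y"]
  by (simp add: rf_def vf_def X3t_def linear_scale)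

lemma vf_vL_coordinates:
  fixes X :: "real^3 \<Rightarrow> real^3"
  assumes x: "x \<in> Mset" and rf_eq: "\<forall>y\<in>Mset. rf L u y = t * vf X3 u y"
    and D: "\<And>i. (vf (Xfield i) u has_derivative D i) (at x)"
    and pos: "pf u x ^ 2 + qf u x ^ 2 > 0"
  defines "n \<equiv> lLf L u x"
    and "dN \<equiv> \<lambda>v. pf u x * D 1 v + qf u x * D 2 v + t * vf X3 u x * (t * D 3 v)"
  shows "vf X (pbarL L u) x = D 1 (X x) / n - pf u x * dN (X x) / n ^ 3"
    and "vf X (qbarL L u) x = D 2 (X x) / n - qf u x * dN (X x) / n ^ 3"
    and "vf X (rbarL L u) x = t * D 3 (X x) / n - t * vf X3 u x * dN (X x) / n ^ 3"
proof -
  have Dp: "(pf u has_derivative D 1) (at x)" and Dq: "(qf u has_derivative D 2) (at x)"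
    and Dr: "(vf X3 u has_derivative D 3) (at x)"
    using D[of 1] D[of 2] D[of 3] by (simp_all add: Xfield_def pf_def[abs_def] qf_def[abs_def])
  have Drf: "(rf L u has_derivative (\<lambda>v. t * D 3 v)) (at x)"
    by (rule has_derivative_transform_within_open[OF has_derivative_mult_right[OF Dr] open_Mset x])
      (simp add: rf_eq)
  have pos3: "pf u x ^ 2 + qf u x ^ 2 + rf L u x ^ 2 > 0"
    using pos by (simp add: add_pos_nonneg)
  have vL_coordinates: "pbarL L u = (\<lambda>y. pf u y / sqrt (pf u y ^ 2 + qf u y ^ 2 + rf L u y ^ 2))"
    "qbarL L u = (\<lambda>y. qf u y / sqrt (pf u y ^ 2 + qf u y ^ 2 + rf L u y ^ 2))"
    "rbarL L u = (\<lambda>y. rf L u y / sqrt (pf u y ^ 2 + qf u y ^ 2 + rf L u y ^ 2))"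
    by (simp_all add: fun_eq_iff pbarL_def qbarL_def rbarL_def lLf_def)
  show "vf X (pbarL L u) x = D 1 (X x) / n - pf u x * dN (X x) / n ^ 3"
    and "vf X (qbarL L u) x = D 2 (X x) / n - qf u x * dN (X x) / n ^ 3"
    and "vf X (rbarL L u) x = t * D 3 (X x) / n - t * vf X3 u x * dN (X x) / n ^ 3"
    unfolding vf_def[of X] vL_coordinates
      has_derivative_divide_sqrt_sum_squares[OF Dp Dq Drf Dp pos3, THEN frechet_derivative_at, symmetric]
      has_derivative_divide_sqrt_sum_squares[OF Dp Dq Drf Dq pos3, THEN frechet_derivative_at, symmetric]
      has_derivative_divide_sqrt_sum_squares[OF Dp Dq Drf Drf pos3, THEN frechet_derivative_at, symmetric]
    by (simp_all add: rf_eq x n_def lLf_def dN_def)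
qed

lemma meanH_eq_frame_mean_curvature:
  assumes L: "L > 0" and x: "x \<in> Mset" and u: "\<forall>y\<in>Mset. u differentiable (at y)"
    and D: "\<And>i. (vf (Xfield i) u has_derivative D i) (at x)"
    and pos: "pf u x ^ 2 + qf u x ^ 2 > 0"
  shows "meanH L \<alpha> u x =
    frame_mean_curvature \<alpha> (\<lambda>i. vf (Xfield i) u x) (\<lambda>i j. D i (Xfield j x)) (1 / sqrt L)"
proof -
  define t where "t = 1 / sqrt L"
  define p q r where "p = pf u x" and "q = qf u x" and "r = vf X3 u x"
  define l n where "l = sqrt (p\<^sup>2 + q\<^sup>2)" and "n = sqrt (p\<^sup>2 + q\<^sup>2 + (t * r)\<^sup>2)"
  have rf_eq: "\<forall>y\<in>Mset. rf L u y = t * vf X3 u y"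
    using u rf_eq_scaled_vf_X3 by (simp add: t_def)
  then have "rf L u x = t * r" using x by (simp add: r_def)
  then have at_x: "pbar u x = p / l" "qbar u x = q / l" "pbarL L u x = p / n" "qbarL L u x = q / n"
    "rbarL L u x = t * r / n" "lf u x = l" "lLf L u x = n"
    by (simp_all add: pbar_def qbar_def pbarL_def qbarL_def rbarL_def lf_def lLf_def p_def q_def l_def n_def)
  have e1x: "e1 u x = (q / l) *\<^sub>R X1 x + (- p / l) *\<^sub>R X2 x + 0 *\<^sub>R X3 x"
    by (simp add: e1_def at_x)
  have e2x: "e2 L u x = (t * r / n * (p / l)) *\<^sub>R X1 x + (t * r / n * (q / l)) *\<^sub>R X2 x
      + (- (l / n) * t) *\<^sub>R X3 x"
    by (simp add: e2_def at_x X3t_def t_def)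
  have D_linear: "D i (a *\<^sub>R v + b *\<^sub>R w + c *\<^sub>R z) = a * D i v + b * D i w + c * D i z"
    for i a b c v w z
    using has_derivative_linear[OF D[of i]] by (simp add: linear_add linear_scale)
  have g: "vf X1 u x = p" "vf X2 u x = q" "vf X3 u x = r"
    by (simp_all add: p_def q_def r_def pf_def qf_def)
  show ?thesis
    unfolding meanH_frame_expansion[OF L x pos] vf_vL_coordinates[OF x rf_eq D pos] at_x e1x e2x D_linear
      t_def[symmetric] p_def[symmetric] q_def[symmetric] r_def[symmetric]
    unfolding frame_mean_curvature_def Let_def using g
    by (simp add: Xfield_def l_def[symmetric] n_def[symmetric]) (simp add: divide_inverse algebra_simps)
qed

lemma horizontal_divergence_eq_frame_mean_curvature_0:
  assumes D: "\<And>i. (vf (Xfield i) u has_derivative D i) (at x)"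
    and pos: "pf u x ^ 2 + qf u x ^ 2 > 0"
  shows "vf X1 (pbar u) x + vf X2 (qbar u) x - (1 - \<alpha>) * pbar u x =
    frame_mean_curvature \<alpha> (\<lambda>i. vf (Xfield i) u x) (\<lambda>i j. D i (Xfield j x)) 0"
proof -
  have Dp: "(pf u has_derivative D 1) (at x)" and Dq: "(qf u has_derivative D 2) (at x)"
    using D[of 1] D[of 2] by (simp_all add: Xfield_def pf_def[abs_def] qf_def[abs_def])
  have "(pbar u has_derivative
      (\<lambda>v. D 1 v / lf u x - pf u x * (pf u x * D 1 v + qf u x * D 2 v) / lf u x ^ 3)) (at x)"
    "(qbar u has_derivative
      (\<lambda>v. D 2 v / lf u x - qf u x * (pf u x * D 1 v + qf u x * D 2 v) / lf u x ^ 3)) (at x)"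
    using has_derivative_divide_sqrt_sum_squares[OF Dp Dq has_derivative_const[of 0] Dp]
      has_derivative_divide_sqrt_sum_squares[OF Dp Dq has_derivative_const[of 0] Dq] pos
    by (simp_all add: pbar_def[abs_def] qbar_def[abs_def] lf_def[abs_def])
  moreover have "frame_mean_curvature \<alpha> (\<lambda>i. vf (Xfield i) u x) (\<lambda>i j. D i (Xfield j x)) 0
      = (D 1 (X1 x) / lf u x - pf u x * (pf u x * D 1 (X1 x) + qf u x * D 2 (X1 x)) / lf u x ^ 3)
      + (D 2 (X2 x) / lf u x - qf u x * (pf u x * D 1 (X2 x) + qf u x * D 2 (X2 x)) / lf u x ^ 3)
      - (1 - \<alpha>) * (pf u x / lf u x)"
    using frame_mean_curvature_0[of "\<lambda>i. vf (Xfield i) u x"] pos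
    by (simp add: Xfield_def pf_def qf_def lf_def)
  ultimately show ?thesis
    unfolding vf_def by (simp add: frechet_derivative_at[symmetric] pbar_def)
qed

lemma C2_on_Mset_differentiable_vf_Xfield:
  assumes u: "C2_on Mset u" and x: "x \<in> Mset"
  shows "vf (Xfield i) u differentiable (at x)"
proof -
  define G where "G k y = frechet_derivative u (at y) (axis k 1)" for k y
  define a c where "a = (if i = 1 then 1 else 2 :: 3)" and "c = (if i = 2 then 1 else 0 :: real)"
  have "Xfield i y = (y$1) *\<^sub>R axis a 1 + c *\<^sub>R axis 3 1" for y
    by (simp add: Xfield_def X_fields_axis a_def c_def)
  then have vf_eq: "vf (Xfield i) u y = y$1 * G a y + c * G 3 y" if "y \<in> Mset" for y
    using u that linear_frechet_derivative[of u "at y"]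
    by (simp add: C2_on_def C1_on_def vf_def G_def linear_add linear_scale)
  have "G k differentiable (at x)" for k
    using u x by (simp add: C2_on_def C1_on_def G_def[abs_def])
  moreover have "(\<lambda>y. y$1) differentiable (at x)"
    using has_derivative_first_coordinate by (auto simp: differentiable_def)
  ultimately have "(\<lambda>y. y$1 * G a y + c * G 3 y) differentiable (at x)"
    by (intro derivative_intros)
  then obtain f' where "((\<lambda>y. y$1 * G a y + c * G 3 y) has_derivative f') (at x)"
    by (auto simp: differentiable_def)
  then have "(vf (Xfield i) u has_derivative f') (at x)"
    by (rule has_derivative_transform_within_open[OF _ open_Mset x]) (simp add: vf_eq)
  then show ?thesis by (auto simp: differentiable_def)
qed

theorem proposition2p16:
  fixes u :: "real^3 \<Rightarrow> real" and \<alpha> :: real and x0 :: "real^3"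
  assumes "C2_on Mset u"
    and "compact (surf u)"
    and "\<forall>x\<in>surf u. frechet_derivative u (at x) \<noteq> (\<lambda>v. 0)"
    and "x0 \<in> surf u"
    and "nablaH u x0 \<noteq> 0"
  shows "((\<lambda>L. meanH L \<alpha> u x0) \<longlongrightarrow>
           vf X1 (pbar u) x0 + vf X2 (qbar u) x0 - (1 - \<alpha>) * pbar u x0) at_top"
proof -
  have x0: "x0 \<in> Mset" using assms(4) by (simp add: surf_def)
  have u: "\<forall>y\<in>Mset. u differentiable (at y)"
    using assms(1) by (simp add: C2_on_def C1_on_def)
  define D where "D i = frechet_derivative (vf (Xfield i) u) (at x0)" for i
  have D: "(vf (Xfield i) u has_derivative D i) (at x0)" for i
    unfolding D_def using C2_on_Mset_differentiable_vf_Xfield[OF assms(1) x0]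
    by (rule frechet_derivative_works[THEN iffD1])
  have pos: "pf u x0 ^ 2 + qf u x0 ^ 2 > 0"
    using assms(5) by (auto simp: nablaH_def pf_def qf_def sum_power2_gt_zero_iff)
  define H where "H = frame_mean_curvature \<alpha> (\<lambda>i. vf (Xfield i) u x0) (\<lambda>i j. D i (Xfield j x0))"
  have "isCont H 0"
    unfolding H_def using pos
    by (intro isCont_frame_mean_curvature_0) (simp add: Xfield_def pf_def qf_def)
  moreover have "((\<lambda>L::real. 1 / sqrt L) \<longlongrightarrow> 0) at_top"
    by real_asymp
  ultimately have "((\<lambda>L. H (1 / sqrt L)) \<longlongrightarrow> H 0) at_top"
    by (rule isCont_tendsto_compose)
  moreover have "eventually (\<lambda>L. H (1 / sqrt L) = meanH L \<alpha> u x0) at_top"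
    using eventually_gt_at_top[of 0]
    by eventually_elim (simp add: H_def meanH_eq_frame_mean_curvature[OF _ x0 u D pos])
  ultimately show ?thesis
    unfolding horizontal_divergence_eq_frame_mean_curvature_0[OF D pos] H_def[symmetric]
    by (rule Lim_transform_eventually)
qed

end
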